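(* Let $n,d,d_k$ be positive integers, $X\in\mathbb{R}^{n\times d}$, $W_Q,W_K\in\mathbb{R}^{d\times d_k}$, $E\in\mathbb{R}^{n\times n}$, and let $P\in\mathbb{R}^{d\times d}$ be an orthogonal projector ($P=P^\top=P^2$). Put $B=W_QW_K^\top$, $X_P=XP$, $$G_Q=\frac{X^\top E X W_K}{\sqrt{d_k}},\qquad G_K=\frac{X^\top E^\top X W_Q}{\sqrt{d_k}}.$$ For real step sizes $\eta_Q,\eta_K\ge 0$ let $W_Q^+=W_Q-\eta_QG_Q$, $W_K^+=W_K-\eta_KG_K$, $B^+=W_Q^+(W_K^+)^\top$, and $$\Delta Z_P=\frac{X_P\,P(B^+-B)P\,X_P^\top}{\sqrt{d_k}}.$$ Then $$\|\Delta Z_P\|_F\le \frac{\|X_P\|_{\mathrm{op}}^2\|X_P\|_F\|E\|_{\mathrm{op}}}{d_k}\Big(\eta_Q\|XW_KW_K^\top P\|_F+\eta_K\|XW_QW_Q^\top P\|_F\Big)+R_2,$$ where $$R_2=\frac{\eta_Q\eta_K\|X_P\|_{\mathrm{op}}^2\|X_P\|_F^2\|E\|_{\mathrm{op}}^2\|XW_K\|_F\|XW_Q\|_F}{d_k^{3/2}}.$$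
   Context: $\|\cdot\|_F$ denotes the Frobenius norm and $\|\cdot\|_{\mathrm{op}}$ the spectral (operator) norm. Interpretation: $X$ is the normalized residual stream entering an attention head with logits $Z=XBX^\top/\sqrt{d_k}$, $P$ projects onto "immature" residual directions, $E$ plays the role of $\partial\mathcal{L}/\partial Z$, and $G_Q,G_K$ are then the gradients of the loss with respect to $W_Q,W_K$; $\Delta Z_P$ is the change of the immature-to-immature logit component $Z_P=X_P PBP X_P^\top/\sqrt{d_k}$ after one gradient step. *)

theory Defs
  imports "HOL-Analysis.Analysis"
begin

definition fro_norm :: "real^'c^'r \<Rightarrow> real" where
  "fro_norm A = sqrt (\<Sum>i\<in>UNIV. \<Sum>j\<in>UNIV. (A $ i $ j)^2)"

definition op_norm :: "real^'c^'r \<Rightarrow> real" where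
  "op_norm A = onorm (\<lambda>x. A *v x)"

end

theory Submission
  imports Defs
begin

(* Write s = 1 / sqrt dk and K = XP^T E. Expanding B+ - B and using P X^T = XP^T, the
   projected update XP P (B+ - B) P XP^T is a combination, with coefficients -s etaQ, -s etaK
   and s^2 etaQ etaK, of the three sandwiches XP M XP^T with
     M = K (X WK WK^T P),   M = (XP^T E^T (X WQ WQ^T P))^T,   M = (K X WK) (XP^T E^T X WQ)^T.
   Every factor XP^T E' C is bounded in Frobenius norm by ||XP||op ||E||op ||C||F, and the
   mixed inequalities ||A B||F <= ||A||op ||B||F, ||A B||F <= ||A||F ||B||op together with
   ||XP||op <= ||XP||F give the estimate term by term. *)

lemma matrix_add_rdistrib: "((A::'a::semiring_1^'m^'n) + B) ** C = A ** C + B ** C"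
  by (simp add: matrix_matrix_mult_def vec_eq_iff sum.distrib algebra_simps)

lemma matrix_diff_rdistrib: "((A::'a::ring_1^'m^'n) - B) ** C = A ** C - B ** C"
  by (simp add: matrix_matrix_mult_def vec_eq_iff sum_subtractf algebra_simps)

lemma matrix_diff_ldistrib: "(A::'a::ring_1^'m^'n) ** (B - C) = A ** B - A ** C"
  by (simp add: matrix_matrix_mult_def vec_eq_iff sum_subtractf algebra_simps)

lemma transpose_diff: "transpose ((A::'a::ab_group_add^'m^'n) - B) = transpose A - transpose B"
  by (simp add: transpose_def vec_eq_iff)

lemma fro_norm_eq_norm: "fro_norm (A::real^'m^'n) = norm A"
  by (simp add: fro_norm_def norm_vec_def L2_set_def power2_abs sum_nonneg)

lemma norm_transpose: "norm (transpose (A::real^'m^'n)) = norm A"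
proof -
  have "(\<Sum>i\<in>UNIV. \<Sum>j\<in>UNIV. (transpose A $ i $ j)^2) = (\<Sum>i\<in>UNIV. \<Sum>j\<in>UNIV. (A $ j $ i)^2)"
    by (simp add: transpose_def)
  also have "\<dots> = (\<Sum>j\<in>UNIV. \<Sum>i\<in>UNIV. (A $ j $ i)^2)"
    by (rule sum.swap)
  finally show ?thesis
    by (simp only: fro_norm_eq_norm[symmetric] fro_norm_def)
qed

lemma op_norm_nonneg: "0 \<le> op_norm (A::real^'m^'n)"
  unfolding op_norm_def by (rule onorm_pos_le) simp

lemma norm_matrix_vector_le_op_norm: "norm ((A::real^'m^'n) *v x) \<le> op_norm A * norm x"
  unfolding op_norm_def by (rule onorm) simp

lemma norm_matrix_vector_le_norm: "norm ((A::real^'m^'n) *v x) \<le> norm A * norm x"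
proof -
  have "norm (A *v x) = L2_set (\<lambda>i. \<bar>inner (A $ i) x\<bar>) UNIV"
    by (simp add: norm_vec_def matrix_vector_mul_component)
  also have "\<dots> \<le> L2_set (\<lambda>i. norm (A $ i) * norm x) UNIV"
    by (rule L2_set_mono) (auto simp: Cauchy_Schwarz_ineq2)
  also have "\<dots> = norm A * norm x"
    by (simp add: norm_vec_def L2_set_left_distrib)
  finally show ?thesis .
qed

lemma op_norm_le_norm: "op_norm (A::real^'m^'n) \<le> norm A"
  unfolding op_norm_def by (rule onorm_le) (rule norm_matrix_vector_le_norm)

lemma op_norm_transpose_le: "op_norm (transpose (A::real^'m^'n)) \<le> op_norm A"
  unfolding op_norm_def
proof (rule onorm_le)
  fix x :: "real^'n"
  let ?y = "transpose A *v x"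
  have "(norm ?y)^2 = inner x (A *v ?y)"
    by (metis power2_norm_eq_inner dot_lmul_matrix inner_commute transpose_matrix_vector
        transpose_transpose vector_transpose_matrix)
  also have "\<dots> \<le> norm x * (op_norm A * norm ?y)"
    by (rule order_trans[OF norm_cauchy_schwarz mult_left_mono[OF norm_matrix_vector_le_op_norm]])
      simp
  finally have "norm ?y * norm ?y \<le> norm ?y * (op_norm A * norm x)"
    by (simp add: power2_eq_square algebra_simps)
  then have "norm ?y \<le> op_norm A * norm x"
    using op_norm_nonneg[of A] by (cases "norm ?y = 0") auto
  then show "norm ?y \<le> onorm ((*v) A) * norm x"
    by (simp add: op_norm_def)
qed

lemma op_norm_transpose: "op_norm (transpose (A::real^'m^'n)) = op_norm A"
  using op_norm_transpose_le[of A] op_norm_transpose_le[of "transpose A"] by simp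

lemma norm_matrix_mult_le_norm_op_norm:
  "norm ((A::real^'m^'n) ** (B::real^'p^'m)) \<le> norm A * op_norm B"
proof -
  have row: "(A ** B) $ i = transpose B *v (A $ i)" for i
    by (simp add: matrix_matrix_mult_def matrix_vector_mult_def transpose_def vec_eq_iff
        mult.commute)
  have "norm (A ** B) = L2_set (\<lambda>i. norm (transpose B *v (A $ i))) UNIV"
    by (simp add: norm_vec_def row del: transpose_matrix_vector)
  also have "\<dots> \<le> L2_set (\<lambda>i. norm (A $ i) * op_norm B) UNIV"
    using norm_matrix_vector_le_op_norm[of "transpose B"]
    by (intro L2_set_mono) (simp_all add: op_norm_transpose mult.commute)
  also have "\<dots> = norm A * op_norm B"
    by (simp add: norm_vec_def L2_set_left_distrib op_norm_nonneg)
  finally show ?thesis .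
qed

lemma norm_matrix_mult_le_op_norm_norm:
  "norm ((A::real^'m^'n) ** (B::real^'p^'m)) \<le> op_norm A * norm B"
  using norm_matrix_mult_le_norm_op_norm[of "transpose B" "transpose A"]
  by (simp add: matrix_transpose_mul[symmetric] norm_transpose op_norm_transpose mult.commute)

lemma norm_matrix_mult_le: "norm ((A::real^'m^'n) ** (B::real^'p^'m)) \<le> norm A * norm B"
  by (rule order_trans[OF norm_matrix_mult_le_norm_op_norm mult_left_mono[OF op_norm_le_norm]])
    simp

lemma norm_sandwich_le: "norm ((A::real^'m^'n) ** M ** transpose A) \<le> (op_norm A)^2 * norm M"
proof -
  have "norm (A ** M ** transpose A) \<le> norm (A ** M) * op_norm A"
    using norm_matrix_mult_le_norm_op_norm[of "A ** M" "transpose A"]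
    by (simp add: op_norm_transpose)
  also have "\<dots> \<le> op_norm A * norm M * op_norm A"
    by (intro mult_right_mono norm_matrix_mult_le_op_norm_norm op_norm_nonneg)
  finally show ?thesis
    by (simp add: power2_eq_square mult_ac)
qed

lemma norm_transpose_mult_mult_le:
  "norm (transpose (A::real^'m^'n) ** E ** C) \<le> op_norm A * op_norm E * norm C"
proof -
  have "norm (transpose A ** E ** C) = norm (transpose A ** (E ** C))"
    by (simp add: matrix_mul_assoc)
  also have "\<dots> \<le> op_norm A * norm (E ** C)"
    using norm_matrix_mult_le_op_norm_norm[of "transpose A"] by (simp add: op_norm_transpose)
  also have "\<dots> \<le> op_norm A * (op_norm E * norm C)"
    by (intro mult_left_mono norm_matrix_mult_le_op_norm_norm op_norm_nonneg)
  finally show ?thesis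
    by (simp add: mult_ac)
qed

lemma projected_logit_update_eq:
  fixes X :: "real^'d^'n" and WQ WK :: "real^'k^'d" and E :: "real^'n^'n"
    and P :: "real^'d^'d"
  assumes P_sym: "transpose P = P" and P_idem: "P ** P = P"
  defines "XP \<equiv> X ** P"
  shows "XP ** (P ** ((WQ - cQ *\<^sub>R (transpose X ** E ** X ** WK)) **
            transpose (WK - cK *\<^sub>R (transpose X ** transpose E ** X ** WQ))
          - WQ ** transpose WK) ** P) ** transpose XP
   = (- cQ) *\<^sub>R (XP ** (transpose XP ** E ** (X ** WK ** transpose WK ** P)) ** transpose XP)
   + (- cK) *\<^sub>R (XP ** transpose (transpose XP ** transpose E ** (X ** WQ ** transpose WQ ** P))
                   ** transpose XP)
   + (cQ * cK) *\<^sub>R (XP ** ((transpose XP ** E ** (X ** WK))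
                   ** transpose (transpose XP ** transpose E ** (X ** WQ))) ** transpose XP)"
proof -
  have absorb_P: "M ** P ** P = M ** P" for M :: "real^'d^'a"
    by (metis P_idem matrix_mul_assoc)
  show ?thesis
    unfolding XP_def
    by (simp only: transpose_diff transpose_scalar matrix_transpose_mul transpose_transpose P_sym
        matrix_diff_ldistrib matrix_diff_rdistrib matrix_add_rdistrib matrix_add_ldistrib
        matrix_scalar_ac scalar_matrix_assoc[symmetric] matrix_mul_assoc absorb_P)
      (simp add: algebra_simps)
qed

lemma norm_projected_logit_update_le:
  fixes X :: "real^'d^'n" and WQ WK :: "real^'k^'d" and E :: "real^'n^'n"
    and P :: "real^'d^'d"
  assumes "transpose P = P" and "P ** P = P" and cQ: "cQ \<ge> 0" and cK: "cK \<ge> 0"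
  defines "XP \<equiv> X ** P"
  shows "norm (XP ** (P ** ((WQ - cQ *\<^sub>R (transpose X ** E ** X ** WK)) **
            transpose (WK - cK *\<^sub>R (transpose X ** transpose E ** X ** WQ))
          - WQ ** transpose WK) ** P) ** transpose XP)
   \<le> cQ * ((op_norm XP)^2 * norm XP * op_norm E * norm (X ** WK ** transpose WK ** P))
     + cK * ((op_norm XP)^2 * norm XP * op_norm E * norm (X ** WQ ** transpose WQ ** P))
     + cQ * cK * ((op_norm XP)^2 * (norm XP)^2 * (op_norm E)^2 * norm (X ** WK) * norm (X ** WQ))"
proof -
  define a where "a = op_norm XP"
  define f where "f = norm XP"
  define e where "e = op_norm E"
  have a: "0 \<le> a" "a \<le> f" and e: "0 \<le> e" "op_norm (transpose E) = e"
    by (simp_all add: a_def f_def e_def op_norm_nonneg op_norm_le_norm op_norm_transpose)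
  have factor_le: "norm (transpose XP ** E' ** C) \<le> a * op_norm E' * norm C"
    for E' :: "real^'n^'n" and C :: "real^'m^'n"
    unfolding a_def by (rule norm_transpose_mult_mult_le)
  have sandwich_le: "norm (XP ** M ** transpose XP) \<le> a^2 * norm M" for M :: "real^'d^'d"
    unfolding a_def by (rule norm_sandwich_le)
  have widen: "a^2 * (a * e * c) \<le> a^2 * f * e * c" if "0 \<le> c" for c
    using mult_left_mono[OF a(2), of "a^2 * e * c"] a e that by (simp add: mult_ac)
  have term1: "norm (XP ** (transpose XP ** E ** C) ** transpose XP) \<le> a^2 * f * e * norm C"
    for C :: "real^'d^'n"
  proof -
    have "norm (XP ** (transpose XP ** E ** C) ** transpose XP)
        \<le> a^2 * norm (transpose XP ** E ** C)"
      by (rule sandwich_le)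
    also have "\<dots> \<le> a^2 * (a * e * norm C)"
      by (rule mult_left_mono[OF factor_le[of E, folded e_def]]) simp
    finally show ?thesis
      using widen[of "norm C"] by simp
  qed
  have term2: "norm (XP ** transpose (transpose XP ** transpose E ** C) ** transpose XP)
      \<le> a^2 * f * e * norm C" for C :: "real^'d^'n"
  proof -
    have "norm (XP ** transpose (transpose XP ** transpose E ** C) ** transpose XP)
        \<le> a^2 * norm (transpose XP ** transpose E ** C)"
      using sandwich_le[of "transpose (transpose XP ** transpose E ** C)"]
      unfolding norm_transpose .
    also have "\<dots> \<le> a^2 * (a * e * norm C)"
      by (rule mult_left_mono[OF factor_le[of "transpose E", unfolded e(2)]]) simp
    finally show ?thesis
      using widen[of "norm C"] by simp
  qed
  have term3: "norm (XP ** ((transpose XP ** E ** U)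
      ** transpose (transpose XP ** transpose E ** V)) ** transpose XP)
      \<le> a^2 * (f^2 * e^2 * norm U * norm V)" for U V :: "real^'k^'n"
  proof -
    have "norm ((transpose XP ** E ** U) ** transpose (transpose XP ** transpose E ** V))
        \<le> norm (transpose XP ** E ** U) * norm (transpose XP ** transpose E ** V)"
      using norm_matrix_mult_le[of "transpose XP ** E ** U"
          "transpose (transpose XP ** transpose E ** V)"]
      unfolding norm_transpose .
    also have "\<dots> \<le> (a * e * norm U) * (a * e * norm V)"
      using factor_le[of E U, folded e_def] factor_le[of "transpose E" V, unfolded e(2)] a e
      by (intro mult_mono) simp_all
    also have "\<dots> = a^2 * (e^2 * norm U * norm V)"
      by (simp add: power2_eq_square mult_ac)
    also have "\<dots> \<le> f^2 * (e^2 * norm U * norm V)"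
      by (rule mult_right_mono[OF power_mono[OF a(2) a(1)]]) simp
    also have "\<dots> = f^2 * e^2 * norm U * norm V"
      by (simp add: mult_ac)
    finally show ?thesis
      by (rule order_trans[OF sandwich_le mult_left_mono]) simp
  qed
  let ?T1 = "XP ** (transpose XP ** E ** (X ** WK ** transpose WK ** P)) ** transpose XP"
  let ?T2 = "XP ** transpose (transpose XP ** transpose E ** (X ** WQ ** transpose WQ ** P))
               ** transpose XP"
  let ?T3 = "XP ** ((transpose XP ** E ** (X ** WK))
               ** transpose (transpose XP ** transpose E ** (X ** WQ))) ** transpose XP"
  have "norm ((- cQ) *\<^sub>R ?T1 + (- cK) *\<^sub>R ?T2 + (cQ * cK) *\<^sub>R ?T3)
      \<le> norm ((- cQ) *\<^sub>R ?T1) + norm ((- cK) *\<^sub>R ?T2) + norm ((cQ * cK) *\<^sub>R ?T3)"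
    by (rule order_trans[OF norm_triangle_ineq add_right_mono[OF norm_triangle_ineq]])
  also have "\<dots> = cQ * norm ?T1 + cK * norm ?T2 + cQ * cK * norm ?T3"
    using cQ cK by simp
  also have "\<dots> \<le> cQ * (a^2 * f * e * norm (X ** WK ** transpose WK ** P))
      + cK * (a^2 * f * e * norm (X ** WQ ** transpose WQ ** P))
      + cQ * cK * (a^2 * (f^2 * e^2 * norm (X ** WK) * norm (X ** WQ)))"
    using cQ cK term1 term2 term3 by (intro add_mono mult_left_mono) simp_all
  finally show ?thesis
    unfolding XP_def projected_logit_update_eq[OF assms(1,2)]
    by (simp add: a_def f_def e_def XP_def mult_ac)
qed

theorem theorem1:
  fixes X :: "real^'d^'n" and WQ WK :: "real^'k^'d" and E :: "real^'n^'n"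
    and P :: "real^'d^'d" and etaQ etaK :: real
  assumes P_sym: "transpose P = P" and P_idem: "P ** P = P"
    and etaQ: "etaQ \<ge> 0" and etaK: "etaK \<ge> 0"
  shows
    "let dk = real CARD('k);
         B = WQ ** transpose WK;
         XP = X ** P;
         GQ = (1 / sqrt dk) *\<^sub>R (transpose X ** E ** X ** WK);
         GK = (1 / sqrt dk) *\<^sub>R (transpose X ** transpose E ** X ** WQ);
         WQp = WQ - etaQ *\<^sub>R GQ;
         WKp = WK - etaK *\<^sub>R GK;
         Bp = WQp ** transpose WKp;
         dZP = (1 / sqrt dk) *\<^sub>R (XP ** (P ** (Bp - B) ** P) ** transpose XP);
         R2 = etaQ * etaK * (op_norm XP)^2 * (fro_norm XP)^2 * (op_norm E)^2
                * fro_norm (X ** WK) * fro_norm (X ** WQ) / (dk powr (3/2))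
     in fro_norm dZP \<le>
          (op_norm XP)^2 * fro_norm XP * op_norm E / dk
            * (etaQ * fro_norm (X ** WK ** transpose WK ** P)
               + etaK * fro_norm (X ** WQ ** transpose WQ ** P))
          + R2"
proof -
  define dk where "dk = real CARD('k)"
  define s where "s = 1 / sqrt dk"
  have dk: "dk > 0"
    by (simp add: dk_def)
  have "dk powr (3/2) = dk * sqrt dk"
    using powr_add[of dk 1 "1/2"] dk by (simp add: powr_half_sqrt)
  then have s: "s \<ge> 0" and s_sq: "s * s = 1 / dk" and s_cube: "s * s * s = 1 / dk powr (3/2)"
    using dk by (simp_all add: s_def)
  let ?a = "op_norm (X ** P)" and ?f = "norm (X ** P)" and ?e = "op_norm E"
  let ?y = "norm (X ** WK ** transpose WK ** P)" and ?z = "norm (X ** WQ ** transpose WQ ** P)"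
  let ?c = "?a^2 * ?f^2 * ?e^2 * norm (X ** WK) * norm (X ** WQ)"
  have "norm (s *\<^sub>R (X ** P ** (P ** ((WQ - (etaQ * s) *\<^sub>R (transpose X ** E ** X ** WK)) **
            transpose (WK - (etaK * s) *\<^sub>R (transpose X ** transpose E ** X ** WQ))
          - WQ ** transpose WK) ** P) ** transpose (X ** P)))
   \<le> s * ((etaQ * s) * (?a^2 * ?f * ?e * ?y) + (etaK * s) * (?a^2 * ?f * ?e * ?z)
            + (etaQ * s) * (etaK * s) * ?c)"
    using mult_left_mono[OF norm_projected_logit_update_le[OF P_sym P_idem
          mult_nonneg_nonneg[OF etaQ s] mult_nonneg_nonneg[OF etaK s]] s] s
    by simp
  also have "\<dots> = (s * s) * (?a^2 * ?f * ?e * (etaQ * ?y + etaK * ?z))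
      + (s * s * s) * (etaQ * etaK * ?c)"
    by (simp add: algebra_simps)
  also have "\<dots> = ?a^2 * ?f * ?e / dk * (etaQ * ?y + etaK * ?z) + etaQ * etaK * ?c / dk powr (3/2)"
    by (simp only: s_cube) (simp add: s_sq)
  finally show ?thesis
    unfolding Let_def fro_norm_eq_norm dk_def[symmetric] s_def[symmetric] scaleR_scaleR
    by (simp only: mult.assoc)
qed

end
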